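(* Let $A\in\Theta(n,r)$. The orbit $e_A$ is closed in $\mathcal F_{\mathrm{ro}(A)}\times\mathcal F_{\mathrm{co}(A)}$ if and only if for all row indices $i<j$ and column indices $s<t$ one has $a_{it}a_{js}=0$ (every $2\times 2$ submatrix of $A$ has at least one zero anti-diagonal entry).
   Context: Fix positive integers $n,r$. $\Theta(n,r)$ is the set of $n\times n$ matrices $A=(a_{ij})$ with nonnegative integer entries summing to $r$; $\mathrm{ro}(A)=(\sum_j a_{1j},\dots,\sum_j a_{nj})$ and $\mathrm{co}(A)=(\sum_i a_{i1},\dots,\sum_i a_{in})$. Let $V$ be an $r$-dimensional vector space over a field that is finite or algebraically closed, $\mathcal F$ the variety of $n$-step flags $0=V_0\subseteq V_1\subseteq\cdots\subseteq V_n=V$, and for a composition $\lambda$ of $r$ into $n$ parts let $\mathcal F_\lambda$ be the flags with $\dim V_i-\dim V_{i-1}=\lambda_i$. The $GL(V)$-orbits on $\mathcal F\times\mathcal F$ (diagonal action) are in bijection with $\Theta(n,r)$: the orbit of $(f,f')$, $f=(V_i)$, $f'=(V'_j)$, corresponds to $A$ with $a_{ij}=\dim(V_i\cap V'_j)-\dim(V_i\cap V'_{j-1}+V_{i-1}\cap V'_j)$, and it lies in $\mathcal F_{\mathrm{ro}(A)}\times\mathcal F_{\mathrm{co}(A)}$. We write $e_A$ for this orbit. *)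

theory Defs
  imports "HOL-Analysis.Analysis" "HOL-Computational_Algebra.Polynomial"
begin

text \<open>The space V is the r-dimensional space 'k^'r with r = CARD('r).
  A flag (V_0,...,V_n) is a function f on nat with f i = UNIV for i >= n.\<close>

definition is_flag :: "nat \<Rightarrow> (nat \<Rightarrow> ('k::field^'r) set) \<Rightarrow> bool" where
  "is_flag n f \<longleftrightarrow> (\<forall>i. vec.subspace (f i)) \<and> f 0 = {0} \<and>
     (\<forall>i<n. f i \<subseteq> f (Suc i)) \<and> (\<forall>i\<ge>n. f i = UNIV)"

definition flags_of_type :: "nat \<Rightarrow> (nat \<Rightarrow> nat) \<Rightarrow> (nat \<Rightarrow> ('k::field^'r) set) set" where
  "flags_of_type n lam = {f. is_flag n f \<and>
     (\<forall>i\<in>{1..n}. vec.dim (f i) - vec.dim (f (i - 1)) = lam i)}"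

definition ssum :: "('k::field^'r) set \<Rightarrow> ('k^'r) set \<Rightarrow> ('k^'r) set" where
  "ssum U W = vec.span (U \<union> W)"

definition orbit_entry :: "(nat \<Rightarrow> ('k::field^'r) set) \<Rightarrow> (nat \<Rightarrow> ('k^'r) set) \<Rightarrow> nat \<Rightarrow> nat \<Rightarrow> nat" where
  "orbit_entry f f' i j = vec.dim (f i \<inter> f' j)
      - vec.dim (ssum (f i \<inter> f' (j - 1)) (f (i - 1) \<inter> f' j))"

definition Theta :: "nat \<Rightarrow> nat \<Rightarrow> (nat \<Rightarrow> nat \<Rightarrow> nat) set" where
  "Theta n r = {A. (\<forall>i j. A i j \<noteq> 0 \<longrightarrow> i \<in> {1..n} \<and> j \<in> {1..n}) \<and>
      (\<Sum>i=1..n. \<Sum>j=1..n. A i j) = r}"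

definition ro :: "nat \<Rightarrow> (nat \<Rightarrow> nat \<Rightarrow> nat) \<Rightarrow> nat \<Rightarrow> nat" where
  "ro n A i = (\<Sum>j=1..n. A i j)"

definition co :: "nat \<Rightarrow> (nat \<Rightarrow> nat \<Rightarrow> nat) \<Rightarrow> nat \<Rightarrow> nat" where
  "co n A j = (\<Sum>i=1..n. A i j)"

definition orbit :: "nat \<Rightarrow> (nat \<Rightarrow> nat \<Rightarrow> nat) \<Rightarrow> ((nat \<Rightarrow> ('k::field^'r) set) \<times> (nat \<Rightarrow> ('k^'r) set)) set" where
  "orbit n A = {(f, f'). is_flag n f \<and> is_flag n f' \<and>
      (\<forall>i\<in>{1..n}. \<forall>j\<in>{1..n}. orbit_entry f f' i j = A i j)}"

inductive_set poly_funs :: "(('c \<Rightarrow> 'k::comm_ring_1) \<Rightarrow> 'k) set" where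
  const: "(\<lambda>x. c) \<in> poly_funs"
| var: "(\<lambda>x. x v) \<in> poly_funs"
| add: "p \<in> poly_funs \<Longrightarrow> q \<in> poly_funs \<Longrightarrow> (\<lambda>x. p x + q x) \<in> poly_funs"
| mult: "p \<in> poly_funs \<Longrightarrow> q \<in> poly_funs \<Longrightarrow> (\<lambda>x. p x * q x) \<in> poly_funs"

definition zariski_closed :: "(('c \<Rightarrow> 'k::comm_ring_1)) set \<Rightarrow> bool" where
  "zariski_closed Z \<longleftrightarrow> (\<exists>P \<subseteq> poly_funs. Z = {x. \<forall>p\<in>P. p x = 0})"

definition flag_from :: "nat \<Rightarrow> (nat \<Rightarrow> nat) \<Rightarrow> (nat \<Rightarrow> 'k::field^'r) \<Rightarrow> nat \<Rightarrow> ('k^'r) set" where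
  "flag_from n lam b i = (if i < n then vec.span (b ` {j. j < (\<Sum>l=1..i. lam l)}) else UNIV)"

definition is_basis_family :: "(nat \<Rightarrow> 'k::field^'r) \<Rightarrow> bool" where
  "is_basis_family b \<longleftrightarrow> inj_on b {..<CARD('r)} \<and> vec.independent (b ` {..<CARD('r)})"

text \<open>Coordinates of a pair of matrices (g,h): x (False,j,c) = c-th coordinate of the j-th
  column of g, x (True,j,c) likewise for h.\<close>
definition basis_of :: "((bool \<times> nat \<times> 'r) \<Rightarrow> 'k) \<Rightarrow> bool \<Rightarrow> nat \<Rightarrow> 'k^'r" where
  "basis_of x s j = (\<chi> c. x (s, j, c))"

text \<open>GL_r x GL_r as a subset of affine space (coordinates with j >= r are forced to be 0).\<close>
definition GL_pairs :: "((bool \<times> nat \<times> 'r::finite) \<Rightarrow> 'k::field) set" where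
  "GL_pairs = {x. (\<forall>s j c. j \<ge> CARD('r) \<longrightarrow> x (s, j, c) = 0) \<and>
      is_basis_family (basis_of x False) \<and> is_basis_family (basis_of x True)}"

text \<open>This is the Zariski topology of the variety F_lam x F_mu = (G x G)/(P_lam x P_mu).\<close>
definition flag_closed :: "nat \<Rightarrow> (nat \<Rightarrow> nat) \<Rightarrow> (nat \<Rightarrow> nat) \<Rightarrow>
    ((nat \<Rightarrow> ('k::field^'r::finite) set) \<times> (nat \<Rightarrow> ('k^'r) set)) set \<Rightarrow> bool" where
  "flag_closed n lam mu S \<longleftrightarrow> S \<subseteq> flags_of_type n lam \<times> flags_of_type n mu \<and>
     (\<exists>Z. zariski_closed Z \<and>
        {x \<in> GL_pairs. (flag_from n lam (basis_of x False), flag_from n mu (basis_of x True)) \<in> S}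
          = GL_pairs \<inter> Z)"

end

theory Submission
  imports Defs
begin

text \<open>By inclusion-exclusion, a pair of flags (V, V') lies in the orbit of A iff
  dim (V_i \<inter> V'_j) equals the corner sum of the entries a_kl with k \<le> i, l \<le> j, for all i, j.
  If A has no crossing, that corner sum is the smaller of dim V_i and dim V'_j, so the orbit is cut
  out by the inclusions V_i \<subseteq> V'_j or V'_j \<subseteq> V_i dictated by the dimensions; in terms of
  bases these are vanishing conditions on determinants.
  If a_it a_js \<noteq> 0 with i < j and s < t, realise the orbit in coordinates indexed by the cells of A
  and shear the basis vector of a cell of (j, s) towards that of a cell of (i, t): this gives a
  polynomial curve of pairs of bases that stays in the orbit for t \<noteq> 0 and at t = 0 exchanges
  the two vectors, which increases dim (V_i \<inter> V'_s) by one. A polynomial vanishing at all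
  t \<noteq> 0 vanishes at 0, so no Zariski closed set can contain the curve without its limit.\<close>

section \<open>Polynomial functions and Zariski closed sets\<close>

lemma poly_funs_sum:
  assumes "finite S" "\<And>s. s \<in> S \<Longrightarrow> f s \<in> poly_funs"
  shows "(\<lambda>x. \<Sum>s\<in>S. f s x) \<in> poly_funs"
  using assms
proof (induction S rule: finite_induct)
  case empty
  then show ?case using poly_funs.const[of 0] by simp
next
  case (insert a S)
  then have "(\<lambda>x. f a x + (\<Sum>s\<in>S. f s x)) \<in> poly_funs"
    by (intro poly_funs.add) (auto intro: eta_contract_eq)
  with insert show ?case by simp
qed

lemma poly_funs_prod:
  assumes "finite S" "\<And>s. s \<in> S \<Longrightarrow> f s \<in> poly_funs"
  shows "(\<lambda>x. \<Prod>s\<in>S. f s x) \<in> poly_funs"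
  using assms
proof (induction S rule: finite_induct)
  case empty
  then show ?case using poly_funs.const[of 1] by simp
next
  case (insert a S)
  then have "(\<lambda>x. f a x * (\<Prod>s\<in>S. f s x)) \<in> poly_funs"
    by (intro poly_funs.mult) auto
  with insert show ?case by simp
qed

lemma poly_funs_det:
  fixes F :: "'n::finite \<Rightarrow> 'n \<Rightarrow> ('c \<Rightarrow> 'k::comm_ring_1) \<Rightarrow> 'k"
  assumes "\<And>a b. F a b \<in> poly_funs"
  shows "(\<lambda>x. det (\<chi> a b. F a b x)) \<in> poly_funs"
proof -
  have "(\<lambda>x. \<Sum>p\<in>{p. p permutes (UNIV::'n set)}. of_int (sign p) * (\<Prod>a\<in>UNIV. F a (p a) x))
          \<in> poly_funs"
    using assms
    by (intro poly_funs_sum poly_funs.mult[OF poly_funs.const] poly_funs_prod)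
       (auto simp: finite_permutations)
  then show ?thesis by (simp add: det_def)
qed

lemma poly_funs_along_curve:
  fixes X :: "'k::comm_ring_1 \<Rightarrow> 'c \<Rightarrow> 'k"
  assumes "p \<in> poly_funs" and "\<And>v. \<exists>Q. \<forall>t. X t v = poly Q t"
  shows "\<exists>Q. \<forall>t. p (X t) = poly Q t"
  using assms(1)
proof induction
  case (const c)
  show ?case by (intro exI[of _ "[:c:]"]) simp
next
  case (var v)
  show ?case using assms(2) by simp
next
  case (add p q)
  then obtain P Q where "\<forall>t. p (X t) = poly P t" "\<forall>t. q (X t) = poly Q t" by blast
  then show ?case by (intro exI[of _ "P + Q"]) simp
next
  case (mult p q)
  then obtain P Q where "\<forall>t. p (X t) = poly P t" "\<forall>t. q (X t) = poly Q t" by blast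
  then show ?case by (intro exI[of _ "P * Q"]) simp
qed

lemma zariski_closed_zero_set: "p \<in> poly_funs \<Longrightarrow> zariski_closed {x. p x = 0}"
  unfolding zariski_closed_def by (intro exI[of _ "{p}"]) auto

lemma zariski_closed_UNIV: "zariski_closed UNIV"
  unfolding zariski_closed_def by (intro exI[of _ "{}"]) auto

lemma zariski_closed_Inter:
  assumes "\<And>Z. Z \<in> \<Z> \<Longrightarrow> zariski_closed Z"
  shows "zariski_closed (\<Inter>\<Z>)"
proof -
  have "\<forall>Z\<in>\<Z>. \<exists>P. P \<subseteq> poly_funs \<and> Z = {x. \<forall>p\<in>P. p x = 0}"
    using assms unfolding zariski_closed_def by blast
  from bchoice[OF this] obtain P
    where P: "\<forall>Z\<in>\<Z>. P Z \<subseteq> poly_funs \<and> Z = {x. \<forall>p\<in>P Z. p x = 0}" by blast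
  then have "\<Inter>\<Z> = {x. \<forall>p\<in>\<Union>(P ` \<Z>). p x = 0}" by blast
  with P show ?thesis unfolding zariski_closed_def by blast
qed

lemma zariski_closed_Int: "zariski_closed Y \<Longrightarrow> zariski_closed Z \<Longrightarrow> zariski_closed (Y \<inter> Z)"
  using zariski_closed_Inter[of "{Y, Z}"] by auto

lemma zariski_closed_imp:
  "(b \<Longrightarrow> zariski_closed Z) \<Longrightarrow> zariski_closed {x. b \<longrightarrow> x \<in> Z}"
  by (cases b) (simp_all add: zariski_closed_UNIV)

lemma infinite_alg_closed_field: "infinite (UNIV :: 'k::alg_closed_field set)"
proof
  assume fin: "finite (UNIV :: 'k set)"
  define q :: "'k poly" where "q = (\<Prod>a\<in>UNIV. [:-a, 1:])"
  have dq: "degree q = card (UNIV :: 'k set)"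
    unfolding q_def by (subst degree_prod_eq_sum_degree) auto
  have "card (UNIV :: 'k set) > 0" using fin by (simp add: card_gt_0_iff)
  then have "degree (1 + q) > 0" using dq by (simp add: degree_add_eq_right)
  then obtain x where "poly (1 + q) x = 0"
    using alg_closed_imp_poly_has_root by blast
  moreover have "poly q x = 0"
    by (simp add: q_def poly_prod fin prod_zero_iff)
  ultimately show False by simp
qed

lemma zariski_closed_curve_limit:
  fixes X :: "'k::idom \<Rightarrow> 'c \<Rightarrow> 'k"
  assumes Z: "zariski_closed Z" and inf: "infinite (UNIV :: 'k set)"
    and coords: "\<And>v. \<exists>Q. \<forall>t. X t v = poly Q t"
    and curve: "\<And>t. t \<noteq> 0 \<Longrightarrow> X t \<in> Z"
  shows "X 0 \<in> Z"
proof -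
  obtain P where P: "P \<subseteq> poly_funs" and Zeq: "Z = {x. \<forall>p\<in>P. p x = 0}"
    using Z unfolding zariski_closed_def by blast
  have "p (X 0) = 0" if p: "p \<in> P" for p
  proof -
    obtain Q where Q: "\<And>t. p (X t) = poly Q t"
      using poly_funs_along_curve[of p X] P p coords by blast
    have "UNIV - {0} \<subseteq> {t. poly Q t = 0}"
      using curve p unfolding Zeq Q[symmetric] by auto
    moreover have "infinite (UNIV - {0::'k})" using inf by simp
    ultimately have "Q = 0" using poly_roots_finite finite_subset by blast
    then show ?thesis by (simp add: Q)
  qed
  then show ?thesis by (simp add: Zeq)
qed

section \<open>Spans of prefixes of a basis\<close>

lemma span_axis_image:
  "vec.span ((\<lambda>i. axis i 1) ` d) = {x::'k::field^'r. \<forall>i. i \<notin> d \<longrightarrow> x $ i = 0}"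
proof
  show "vec.span ((\<lambda>i. axis i 1) ` d) \<subseteq> {x::'k^'r. \<forall>i. i \<notin> d \<longrightarrow> x $ i = 0}"
    by (rule vec.span_minimal) (auto simp: vec.subspace_def axis_def)
  show "{x::'k^'r. \<forall>i. i \<notin> d \<longrightarrow> x $ i = 0} \<subseteq> vec.span ((\<lambda>i. axis i 1) ` d)"
  proof
    fix x :: "'k^'r"
    assume x: "x \<in> {x. \<forall>i. i \<notin> d \<longrightarrow> x $ i = 0}"
    have "x = (\<Sum>i\<in>UNIV. x $ i *s axis i 1)"
      by (rule basis_expansion[symmetric])
    also have "\<dots> = (\<Sum>i\<in>d. x $ i *s axis i 1)"
      using x by (intro sum.mono_neutral_cong_right) auto
    also have "\<dots> \<in> vec.span ((\<lambda>i. axis i 1) ` d)"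
      by (simp add: vec.span_sum vec.span_clauses)
    finally show "x \<in> vec.span ((\<lambda>i. axis i 1) ` d)" .
  qed
qed

lemma dim_span_axis_Int:
  "vec.dim (vec.span ((\<lambda>i. axis i (1::'k::field)) ` X) \<inter> vec.span ((\<lambda>i. axis i 1) ` Y)
      :: ('k^'r) set) = card (X \<inter> Y)"
proof -
  have "vec.span ((\<lambda>i. axis i (1::'k)) ` X) \<inter> vec.span ((\<lambda>i. axis i 1) ` Y)
      = {x::'k^'r. \<forall>i. i \<notin> X \<inter> Y \<longrightarrow> x $ i = 0}"
    unfolding span_axis_image by auto
  then show ?thesis using dim_substandard_cart[of "X \<inter> Y"] by (simp only:)
qed

lemma span_eq_UNIV_iff_dim:
  "vec.span S = UNIV \<longleftrightarrow> vec.dim (S :: ('k::field^'r::finite) set) = CARD('r)"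
  using vec.dim_eq_full[of S] by (simp add: vec.dimension_def card_cart_basis)

lemma is_basis_family_iff_span:
  "is_basis_family (b :: nat \<Rightarrow> 'k::field^'r::finite) \<longleftrightarrow> vec.span (b ` {..<CARD('r)}) = UNIV"
proof
  assume "is_basis_family b"
  then have inj: "inj_on b {..<CARD('r)}" and ind: "vec.independent (b ` {..<CARD('r)})"
    by (auto simp: is_basis_family_def)
  have "vec.dim (b ` {..<CARD('r)}) = CARD('r)"
    using vec.dim_eq_card_independent[OF ind] card_image[OF inj] by simp
  then show "vec.span (b ` {..<CARD('r)}) = UNIV"
    by (simp add: span_eq_UNIV_iff_dim)
next
  assume sp: "vec.span (b ` {..<CARD('r)}) = UNIV"
  have card_le: "card (b ` {..<CARD('r)}) \<le> vec.dim (UNIV :: ('k^'r) set)"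
    using card_image_le[of "{..<CARD('r)}" b] by (simp add: card_cart_basis)
  then have ind: "vec.independent (b ` {..<CARD('r)})"
    using sp by (intro vec.card_le_dim_spanning[where V=UNIV]) auto
  have "card (b ` {..<CARD('r)}) = CARD('r)"
    using vec.dim_eq_card_independent[OF ind] sp by (simp add: span_eq_UNIV_iff_dim)
  then have "inj_on b {..<CARD('r)}"
    by (intro eq_card_imp_inj_on) simp_all
  with ind show "is_basis_family b" by (simp add: is_basis_family_def)
qed

lemma dim_span_prefix:
  fixes b :: "nat \<Rightarrow> 'k::field^'r::finite"
  assumes b: "is_basis_family b" and m: "m \<le> CARD('r)"
  shows "vec.dim (vec.span (b ` {..<m})) = m"
proof -
  have sub: "{..<m} \<subseteq> {..<CARD('r)}" using m by auto
  have inj: "inj_on b {..<m}" and ind: "vec.independent (b ` {..<m})"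
    using b inj_on_subset[OF _ sub] vec.independent_mono[OF _ image_mono[OF sub]]
    by (auto simp: is_basis_family_def)
  show ?thesis
    using vec.dim_span_eq_card_independent[OF ind] card_image[OF inj] by simp
qed

lemma span_update_eq_UNIV:
  fixes h :: "nat \<Rightarrow> 'k::field^'r::finite"
  assumes sp: "vec.span (h ` {..<CARD('r)}) = UNIV" and l: "l < CARD('r)"
    and g: "g = (\<Sum>k<CARD('r). c k *s h k)" and cl: "c l \<noteq> 0"
  shows "vec.span ((h(l := g)) ` {..<CARD('r)}) = UNIV"
proof -
  let ?S = "vec.span ((h(l := g)) ` {..<CARD('r)})"
  have hk: "h k \<in> ?S" if "k < CARD('r)" "k \<noteq> l" for k
    using that by (intro vec.span_base) (auto intro!: image_eqI[of _ _ k])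
  have "g \<in> ?S" using l by (intro vec.span_base) (auto intro!: image_eqI[of _ _ l])
  moreover have "(\<Sum>k\<in>{..<CARD('r)} - {l}. c k *s h k) \<in> ?S"
    by (intro vec.span_sum vec.span_scale hk) auto
  moreover have "h l = (1 / c l) *s (g - (\<Sum>k\<in>{..<CARD('r)} - {l}. c k *s h k))"
    using cl l by (simp add: g sum.remove[of "{..<CARD('r)}" l])
  ultimately have "h l \<in> ?S" by (simp add: vec.span_diff vec.span_scale)
  with hk have "h ` {..<CARD('r)} \<subseteq> ?S" by auto
  then have "vec.span (h ` {..<CARD('r)}) \<subseteq> ?S"
    by (simp add: vec.span_minimal)
  with sp show ?thesis by auto
qed

lemma in_span_prefix_iff_exchange:
  fixes h :: "nat \<Rightarrow> 'k::field^'r::finite"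
  assumes h: "is_basis_family h" and m: "m \<le> CARD('r)"
  shows "g \<in> vec.span (h ` {..<m}) \<longleftrightarrow>
    (\<forall>l. m \<le> l \<and> l < CARD('r) \<longrightarrow> vec.span ((h(l := g)) ` {..<CARD('r)}) \<noteq> UNIV)"
proof
  assume g: "g \<in> vec.span (h ` {..<m})"
  show "\<forall>l. m \<le> l \<and> l < CARD('r) \<longrightarrow> vec.span ((h(l := g)) ` {..<CARD('r)}) \<noteq> UNIV"
  proof (intro allI impI notI)
    fix l
    assume "m \<le> l \<and> l < CARD('r)" and sp: "vec.span ((h(l := g)) ` {..<CARD('r)}) = UNIV"
    then have ml: "m \<le> l" and l: "l < CARD('r)" by simp_all
    let ?W = "h ` ({..<CARD('r)} - {l})"
    have "h ` {..<m} \<subseteq> ?W" using ml l by auto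
    then have "g \<in> vec.span ?W" using g vec.span_mono by blast
    then have "(h(l := g)) ` {..<CARD('r)} \<subseteq> vec.span ?W"
      by (auto intro: vec.span_base)
    then have "UNIV \<subseteq> vec.span ?W"
      using sp vec.span_minimal[OF _ vec.subspace_span] by metis
    then have "vec.dim (UNIV :: ('k^'r) set) \<le> card ?W"
      by (intro vec.dim_le_card) auto
    also have "\<dots> \<le> card ({..<CARD('r)} - {l})" by (rule card_image_le) simp
    finally have "CARD('r) \<le> card ({..<CARD('r)} - {l})" by (simp add: card_cart_basis)
    with l show False by simp
  qed
next
  assume H: "\<forall>l. m \<le> l \<and> l < CARD('r) \<longrightarrow> vec.span ((h(l := g)) ` {..<CARD('r)}) \<noteq> UNIV"
  have inj: "inj_on h {..<CARD('r)}" using h by (simp add: is_basis_family_def)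
  have sp: "vec.span (h ` {..<CARD('r)}) = UNIV" using h by (simp add: is_basis_family_iff_span)
  then obtain u where "g = (\<Sum>v\<in>h ` {..<CARD('r)}. u v *s v)"
    using vec.span_finite[of "h ` {..<CARD('r)}"] by auto
  then have g: "g = (\<Sum>k<CARD('r). u (h k) *s h k)"
    by (simp add: sum.reindex[OF inj])
  have "u (h l) = 0" if "m \<le> l" "l < CARD('r)" for l
    using span_update_eq_UNIV[OF sp _ g] H that by blast
  then have "g = (\<Sum>k<m. u (h k) *s h k)"
    using m by (intro trans[OF g] sum.mono_neutral_right) auto
  also have "\<dots> \<in> vec.span (h ` {..<m})"
    by (intro vec.span_sum vec.span_scale vec.span_base) auto
  finally show "g \<in> vec.span (h ` {..<m})" .
qed

definition col_index :: "'r::finite \<Rightarrow> nat" where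
  "col_index = (SOME e. bij_betw e (UNIV :: 'r set) {..<CARD('r)})"

lemma bij_col_index: "bij_betw (col_index :: 'r::finite \<Rightarrow> nat) UNIV {..<CARD('r)}"
proof -
  have "\<exists>e. bij_betw e (UNIV :: 'r set) {..<CARD('r)}"
    using ex_bij_betw_finite_nat[of "UNIV :: 'r set"] by (simp add: atLeast0LessThan)
  then show ?thesis unfolding col_index_def by (rule someI_ex)
qed

definition matrix_of_family :: "(nat \<Rightarrow> 'k^'r) \<Rightarrow> 'k^'r^'r::finite" where
  "matrix_of_family v = (\<chi> a b. v (col_index b) $ a)"

lemma det_matrix_of_family_nonzero_iff:
  fixes v :: "nat \<Rightarrow> 'k::field^'r::finite"
  shows "det (matrix_of_family v) \<noteq> 0 \<longleftrightarrow> vec.span (v ` {..<CARD('r)}) = UNIV"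
proof -
  have "columns (matrix_of_family v) = range (\<lambda>b::'r. v (col_index b))"
    by (auto simp: columns_def column_def matrix_of_family_def vec_lambda_eta)
  also have "\<dots> = v ` {..<CARD('r)}"
    using bij_betw_imp_surj_on[OF bij_col_index] by (metis image_image)
  finally have "columns (matrix_of_family v) = v ` {..<CARD('r)}" .
  then show ?thesis
    by (simp add: invertible_det_nz[symmetric] invertible_right_inverse
        matrix_right_invertible_span_columns)
qed

lemma span_prefix_subset_iff_det:
  fixes g h :: "nat \<Rightarrow> 'k::field^'r::finite"
  assumes h: "is_basis_family h" and m: "m \<le> CARD('r)"
  shows "vec.span (g ` {..<p}) \<subseteq> vec.span (h ` {..<m}) \<longleftrightarrow>
    (\<forall>k<p. \<forall>l. m \<le> l \<and> l < CARD('r) \<longrightarrow> det (matrix_of_family (h(l := g k))) = 0)"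
proof -
  have "vec.span (g ` {..<p}) \<subseteq> vec.span (h ` {..<m}) \<longleftrightarrow> (\<forall>k<p. g k \<in> vec.span (h ` {..<m}))"
    using vec.span_minimal[of "g ` {..<p}" "vec.span (h ` {..<m})"]
    by (auto simp: vec.subspace_span intro: vec.span_base)
  then show ?thesis
    unfolding in_span_prefix_iff_exchange[OF h m] det_matrix_of_family_nonzero_iff[symmetric]
    by simp
qed

section \<open>Orbits through intersection dimensions\<close>

lemma flag_subspace: "is_flag n f \<Longrightarrow> vec.subspace (f i)"
  by (simp add: is_flag_def)

lemma flag_mono:
  assumes f: "is_flag n f" and "i \<le> i'"
  shows "f i \<subseteq> f i'"
  using assms(2)
proof (induction i' rule: dec_induct)
  case (step m)
  have "f m \<subseteq> f (Suc m)"
    using f unfolding is_flag_def by (cases "m < n") auto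
  with step show ?case by blast
qed simp

definition meet_dim :: "(nat \<Rightarrow> ('k::field^'r) set) \<Rightarrow> (nat \<Rightarrow> ('k^'r) set) \<Rightarrow> nat \<Rightarrow> nat \<Rightarrow> nat"
  where "meet_dim f f' i j = vec.dim (f i \<inter> f' j)"

definition corner_sum :: "(nat \<Rightarrow> nat \<Rightarrow> nat) \<Rightarrow> nat \<Rightarrow> nat \<Rightarrow> nat"
  where "corner_sum A i j = (\<Sum>k=1..i. \<Sum>l=1..j. A k l)"

lemma corner_sum_0 [simp]: "corner_sum A 0 j = 0" "corner_sum A i 0 = 0"
  by (simp_all add: corner_sum_def)

lemma corner_sum_mixed_difference:
  "int (A (Suc i) (Suc j)) = int (corner_sum A (Suc i) (Suc j)) - int (corner_sum A (Suc i) j)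
      - int (corner_sum A i (Suc j)) + int (corner_sum A i j)"
  by (simp add: corner_sum_def sum.distrib)

lemma corner_sum_as_sum_over_cells: "corner_sum A i j = (\<Sum>(k, l)\<in>{1..i} \<times> {1..j}. A k l)"
  by (simp add: corner_sum_def sum.cartesian_product)

lemma meet_dim_0:
  assumes "is_flag n f" "is_flag n f'"
  shows "meet_dim f f' 0 j = 0" "meet_dim f f' i 0 = 0"
  using assms by (auto simp: meet_dim_def is_flag_def)

text \<open>By the dimension formula for a sum of subspaces, the entries of the orbit matrix are the
  mixed second differences of the intersection dimensions.\<close>
lemma orbit_entry_mixed_difference:
  fixes f f' :: "nat \<Rightarrow> ('k::field^'r::finite) set"
  assumes f: "is_flag n f" and f': "is_flag n f'"
  shows "int (orbit_entry f f' (Suc i) (Suc j)) = int (meet_dim f f' (Suc i) (Suc j))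
           - int (meet_dim f f' (Suc i) j) - int (meet_dim f f' i (Suc j)) + int (meet_dim f f' i j)"
proof -
  let ?X = "f (Suc i) \<inter> f' j" and ?Y = "f i \<inter> f' (Suc j)"
  have sX: "vec.subspace ?X" and sY: "vec.subspace ?Y"
    using f f' by (auto intro: vec.subspace_inter flag_subspace)
  have mono: "f i \<subseteq> f (Suc i)" "f' j \<subseteq> f' (Suc j)"
    using flag_mono[OF f] flag_mono[OF f'] by auto
  have sum: "ssum ?X ?Y = {x + y |x y. x \<in> ?X \<and> y \<in> ?Y}"
  proof -
    have X: "vec.span ?X = ?X" and Y: "vec.span ?Y = ?Y"
      using sX sY by (simp_all add: vec.span_eq_iff)
    show ?thesis unfolding ssum_def vec.span_Un X Y by simp
  qed
  have "?X \<inter> ?Y = f i \<inter> f' j" using mono by auto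
  then have "vec.dim (ssum ?X ?Y) + vec.dim (f i \<inter> f' j) = vec.dim ?X + vec.dim ?Y"
    using vec.dim_sums_Int[OF sX sY] sum by simp
  moreover have "ssum ?X ?Y \<subseteq> f (Suc i) \<inter> f' (Suc j)"
    unfolding ssum_def using mono f f'
    by (intro vec.span_minimal) (auto intro: vec.subspace_inter flag_subspace)
  then have "vec.dim (ssum ?X ?Y) \<le> meet_dim f f' (Suc i) (Suc j)"
    unfolding meet_dim_def by (rule vec.dim_subset)
  ultimately show ?thesis
    unfolding orbit_entry_def meet_dim_def diff_Suc_1 by linarith
qed

lemma eq_if_mixed_differences_eq:
  fixes D N :: "nat \<Rightarrow> nat \<Rightarrow> int"
  assumes "\<And>j. D 0 j = N 0 j" and "\<And>i. D i 0 = N i 0"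
    and "\<And>i j. i < n \<Longrightarrow> j < n \<Longrightarrow> D (Suc i) (Suc j) - D (Suc i) j - D i (Suc j) + D i j
                                  = N (Suc i) (Suc j) - N (Suc i) j - N i (Suc j) + N i j"
    and "i \<le> n" "j \<le> n"
  shows "D i j = N i j"
  using assms(4,5)
proof (induction i arbitrary: j)
  case (Suc i)
  note outer = Suc.IH
  from Suc.prems show ?case
  proof (induction j)
    case (Suc j)
    have "D (Suc i) j = N (Suc i) j" "D i j = N i j" "D i (Suc j) = N i (Suc j)"
      using Suc.IH outer Suc.prems by simp_all
    with assms(3)[of i j] Suc.prems show ?case by simp
  qed (simp add: assms(2))
qed (simp add: assms(1))

lemma orbit_iff_meet_dims:
  fixes f f' :: "nat \<Rightarrow> ('k::field^'r::finite) set"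
  assumes f: "is_flag n f" and f': "is_flag n f'"
  shows "(f, f') \<in> orbit n A \<longleftrightarrow> (\<forall>i\<le>n. \<forall>j\<le>n. meet_dim f f' i j = corner_sum A i j)"
proof
  assume o: "(f, f') \<in> orbit n A"
  have diffs: "int (meet_dim f f' (Suc i) (Suc j)) - int (meet_dim f f' (Suc i) j)
                 - int (meet_dim f f' i (Suc j)) + int (meet_dim f f' i j)
               = int (corner_sum A (Suc i) (Suc j)) - int (corner_sum A (Suc i) j)
                 - int (corner_sum A i (Suc j)) + int (corner_sum A i j)"
    if "i < n" "j < n" for i j
  proof -
    have "orbit_entry f f' (Suc i) (Suc j) = A (Suc i) (Suc j)"
      using o that by (simp add: orbit_def)
    then show ?thesis
      using orbit_entry_mixed_difference[OF f f', of i j] corner_sum_mixed_difference[of A i j]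
      by linarith
  qed
  have "int (meet_dim f f' i j) = int (corner_sum A i j)" if "i \<le> n" "j \<le> n" for i j
    using eq_if_mixed_differences_eq[where D = "\<lambda>i j. int (meet_dim f f' i j)"
        and N = "\<lambda>i j. int (corner_sum A i j)", OF _ _ diffs that]
    by (simp add: meet_dim_0[OF f f'])
  then show "\<forall>i\<le>n. \<forall>j\<le>n. meet_dim f f' i j = corner_sum A i j" by simp
next
  assume dims: "\<forall>i\<le>n. \<forall>j\<le>n. meet_dim f f' i j = corner_sum A i j"
  have "orbit_entry f f' (Suc i) (Suc j) = A (Suc i) (Suc j)" if "i < n" "j < n" for i j
  proof -
    have "int (orbit_entry f f' (Suc i) (Suc j)) = int (A (Suc i) (Suc j))"
      using that dims orbit_entry_mixed_difference[OF f f', of i j]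
        corner_sum_mixed_difference[of A i j] by simp
    then show ?thesis by simp
  qed
  then have "orbit_entry f f' i j = A i j" if "i \<in> {1..n}" "j \<in> {1..n}" for i j
    using that by (metis Suc_le_eq Suc_pred' atLeastAtMost_iff not_one_le_zero neq0_conv)
  with f f' show "(f, f') \<in> orbit n A" by (simp add: orbit_def)
qed

lemma corner_sum_full_column: "corner_sum A i n = (\<Sum>k=1..i. ro n A k)"
  by (simp add: corner_sum_def ro_def)

lemma corner_sum_full_row: "corner_sum A n j = (\<Sum>l=1..j. co n A l)"
  unfolding corner_sum_def co_def by (rule sum.swap)

lemma flag_of_type_if_dims:
  assumes f: "is_flag n f" and dims: "\<And>i. i \<le> n \<Longrightarrow> vec.dim (f i) = (\<Sum>l=1..i. lam l)"
  shows "f \<in> flags_of_type n lam"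
proof -
  have "vec.dim (f i) - vec.dim (f (i - 1)) = lam i" if "i \<in> {1..n}" for i
    using dims[of i] dims[of "i - 1"] that
    by (cases i) simp_all
  with f show ?thesis
    unfolding flags_of_type_def by blast
qed

lemma orbit_subset_flags_of_type:
  "(orbit n A :: ((nat \<Rightarrow> ('k::field^'r::finite) set) \<times> _) set)
     \<subseteq> flags_of_type n (ro n A) \<times> flags_of_type n (co n A)"
proof safe
  fix f f' :: "nat \<Rightarrow> ('k^'r) set"
  assume o: "(f, f') \<in> orbit n A"
  then have f: "is_flag n f" and f': "is_flag n f'" by (auto simp: orbit_def)
  have dims: "meet_dim f f' i j = corner_sum A i j" if "i \<le> n" "j \<le> n" for i j
    using o that orbit_iff_meet_dims[OF f f'] by blast
  have "f n = UNIV" "f' n = UNIV" using f f' by (simp_all add: is_flag_def)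
  then show "f \<in> flags_of_type n (ro n A)" "f' \<in> flags_of_type n (co n A)"
    using dims[of _ n] dims[of n] f f'
    by (auto intro!: flag_of_type_if_dims simp: meet_dim_def corner_sum_full_column,
        auto intro!: flag_of_type_if_dims simp: meet_dim_def corner_sum_full_row)
qed

lemma flag_from_is_flag:
  assumes "n > 0"
  shows "is_flag n (flag_from n lam b)"
  unfolding is_flag_def
proof (intro conjI allI impI)
  fix i
  show "vec.subspace (flag_from n lam b i)"
    by (simp add: flag_from_def vec.subspace_UNIV)
  show "n \<le> i \<Longrightarrow> flag_from n lam b i = UNIV"
    by (simp add: flag_from_def)
  show "i < n \<Longrightarrow> flag_from n lam b i \<subseteq> flag_from n lam b (Suc i)"
    by (auto simp: flag_from_def intro!: vec.span_mono image_mono)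
qed (use assms in \<open>simp add: flag_from_def\<close>)

lemma flag_from_eq_span_prefix:
  fixes b :: "nat \<Rightarrow> 'k::field^'r::finite"
  assumes b: "is_basis_family b" and total: "(\<Sum>l=1..n. lam l) = CARD('r)" and i: "i \<le> n"
  shows "flag_from n lam b i = vec.span (b ` {..<(\<Sum>l=1..i. lam l)})"
  using assms is_basis_family_iff_span[of b]
  by (cases "i < n") (auto simp: flag_from_def lessThan_def)

lemma partial_sum_le_total:
  fixes lam :: "nat \<Rightarrow> nat"
  assumes "i \<le> n"
  shows "(\<Sum>l=1..i. lam l) \<le> (\<Sum>l=1..n. lam l)"
  using assms by (intro sum_mono2) auto

section \<open>Without crossings the orbit is closed\<close>

definition no_crossing :: "nat \<Rightarrow> (nat \<Rightarrow> nat \<Rightarrow> nat) \<Rightarrow> bool" where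
  "no_crossing n A \<longleftrightarrow>
     (\<forall>i j s t. 1 \<le> i \<and> i < j \<and> j \<le> n \<and> 1 \<le> s \<and> s < t \<and> t \<le> n \<longrightarrow> A i t * A j s = 0)"

lemma no_crossing_transpose: "no_crossing n (\<lambda>i j. A j i) \<longleftrightarrow> no_crossing n A"
  unfolding no_crossing_def by (metis mult.commute)

lemma corner_sum_transpose: "corner_sum (\<lambda>i j. A j i) i j = corner_sum A j i"
  unfolding corner_sum_def by (rule sum.swap)

lemma corner_sum_mono:
  assumes "i \<le> i'" "j \<le> j'"
  shows "corner_sum A i j \<le> corner_sum A i' j'"
  unfolding corner_sum_as_sum_over_cells using assms by (intro sum_mono2) auto

lemma corner_sum_eq_if_zero_outside:
  assumes "i \<le> i'" "j \<le> j'"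
    and zero: "\<And>k l. k \<in> {1..i'} \<Longrightarrow> l \<in> {1..j'} \<Longrightarrow> \<not> (k \<le> i \<and> l \<le> j) \<Longrightarrow> A k l = 0"
  shows "corner_sum A i' j' = corner_sum A i j"
  unfolding corner_sum_as_sum_over_cells
proof (rule sum.mono_neutral_right)
  show "\<forall>x\<in>{1..i'} \<times> {1..j'} - {1..i} \<times> {1..j}. (case x of (k, l) \<Rightarrow> A k l) = 0"
  proof
    fix x
    assume x: "x \<in> {1..i'} \<times> {1..j'} - {1..i} \<times> {1..j}"
    obtain k l where kl: "x = (k, l)" by (cases x)
    have "A k l = 0" using x kl by (intro zero) auto
    then show "(case x of (k, l) \<Rightarrow> A k l) = 0" by (simp add: kl)
  qed
qed (use assms in auto)

lemma corner_sum_add_entry_le: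
  assumes "1 \<le> k" "j < l"
  shows "corner_sum A k j + A k l \<le> corner_sum A k l"
proof -
  have "corner_sum A k j + A k l = (\<Sum>(k', l')\<in>insert (k, l) ({1..k} \<times> {1..j}). A k' l')"
    unfolding corner_sum_as_sum_over_cells using assms by (subst sum.insert) auto
  also have "\<dots> \<le> corner_sum A k l"
    unfolding corner_sum_as_sum_over_cells using assms by (intro sum_mono2) auto
  finally show ?thesis .
qed

text \<open>A nonzero a_kl with k \<le> i and l > j would force all entries below row k and left of
  column l to vanish, whence corner_sum A n j = corner_sum A k j < corner_sum A i n.\<close>
lemma corner_sum_eq_row_part:
  assumes nc: "no_crossing n A" and ij: "i \<le> n" "j \<le> n"
    and le: "corner_sum A i n \<le> corner_sum A n j"
  shows "corner_sum A i j = corner_sum A i n"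
proof -
  have zero: "A k l = 0" if k: "1 \<le> k" "k \<le> i" and l: "j < l" "l \<le> n" for k l
  proof (rule ccontr)
    assume nz: "A k l \<noteq> 0"
    have "A k' l' = 0" if "k' \<in> {1..n}" "l' \<in> {1..j}" "\<not> (k' \<le> k \<and> l' \<le> j)" for k' l'
      using nc[unfolded no_crossing_def, rule_format, of k k' l' l] that k l nz by auto
    then have "corner_sum A n j = corner_sum A k j"
      using k ij by (intro corner_sum_eq_if_zero_outside) simp_all
    moreover have "corner_sum A k j + A k l \<le> corner_sum A i n"
      using corner_sum_add_entry_le[OF k(1) l(1), of A] corner_sum_mono[of k i l n A] k l
      by linarith
    ultimately show False using le nz by linarith
  qed
  have "corner_sum A i n = corner_sum A i j"
    using ij zero by (intro corner_sum_eq_if_zero_outside) (simp_all add: not_le)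
  then show ?thesis ..
qed

lemma corner_sum_eq_min:
  assumes nc: "no_crossing n A" and ij: "i \<le> n" "j \<le> n"
  shows "corner_sum A i j = min (corner_sum A i n) (corner_sum A n j)"
proof (cases "corner_sum A i n \<le> corner_sum A n j")
  case True
  then show ?thesis using corner_sum_eq_row_part[OF nc ij] by simp
next
  case False
  have "corner_sum (\<lambda>i j. A j i) j i = corner_sum (\<lambda>i j. A j i) j n"
  proof (rule corner_sum_eq_row_part)
    show "no_crossing n (\<lambda>i j. A j i)" using nc no_crossing_transpose[of n A] by blast
    show "corner_sum (\<lambda>i j. A j i) j n \<le> corner_sum (\<lambda>i j. A j i) n i"
      using False corner_sum_transpose[of A j n] corner_sum_transpose[of A n i] by simp
  qed (use ij in simp_all)
  with False show ?thesis
    using corner_sum_transpose[of A j i] corner_sum_transpose[of A j n] by simp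
qed

lemma dim_Int_eq_min_iff:
  fixes U W :: "('k::field^'r::finite) set"
  assumes sU: "vec.subspace U" and sW: "vec.subspace W"
  shows "vec.dim (U \<inter> W) = min (vec.dim U) (vec.dim W) \<longleftrightarrow>
    (vec.dim U \<le> vec.dim W \<longrightarrow> U \<subseteq> W) \<and> (vec.dim W \<le> vec.dim U \<longrightarrow> W \<subseteq> U)"
proof -
  have sI: "vec.subspace (U \<inter> W)" using sU sW by (rule vec.subspace_inter)
  have "vec.dim (U \<inter> W) = vec.dim V \<longleftrightarrow> V \<subseteq> U \<inter> W"
    if V: "vec.subspace V" "U \<inter> W \<subseteq> V" for V
  proof
    assume "vec.dim (U \<inter> W) = vec.dim V"
    then show "V \<subseteq> U \<inter> W" using vec.subspace_dim_equal[OF sI V] by simp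
  next
    assume "V \<subseteq> U \<inter> W"
    with V(2) show "vec.dim (U \<inter> W) = vec.dim V" by (simp add: subset_antisym)
  qed
  from this[OF sU] this[OF sW] show ?thesis
    by (cases "vec.dim U \<le> vec.dim W") (auto simp: min_def)
qed

lemma corner_sum_Theta: "A \<in> Theta n r \<Longrightarrow> corner_sum A n n = r"
  by (simp add: Theta_def corner_sum_def)

lemma flags_from_in_orbit_iff_inclusions:
  fixes g h :: "nat \<Rightarrow> 'k::field^'r::finite"
  assumes n: "n > 0" and A: "A \<in> Theta n CARD('r)" and nc: "no_crossing n A"
    and g: "is_basis_family g" and h: "is_basis_family h"
  shows "(flag_from n (ro n A) g, flag_from n (co n A) h) \<in> orbit n A \<longleftrightarrow>
    (\<forall>i\<le>n. \<forall>j\<le>n.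
      (corner_sum A i n \<le> corner_sum A n j \<longrightarrow>
         vec.span (g ` {..<corner_sum A i n}) \<subseteq> vec.span (h ` {..<corner_sum A n j})) \<and>
      (corner_sum A n j \<le> corner_sum A i n \<longrightarrow>
         vec.span (h ` {..<corner_sum A n j}) \<subseteq> vec.span (g ` {..<corner_sum A i n})))"
proof -
  let ?f = "flag_from n (ro n A) g" and ?f' = "flag_from n (co n A) h"
  have total: "(\<Sum>l=1..n. ro n A l) = CARD('r)" "(\<Sum>l=1..n. co n A l) = CARD('r)"
    using corner_sum_Theta[OF A] corner_sum_full_column[of A n n] corner_sum_full_row[of A n n]
    by simp_all
  have le: "corner_sum A i n \<le> CARD('r)" "corner_sum A n i \<le> CARD('r)" if "i \<le> n" for i
    using partial_sum_le_total[OF that, of "ro n A"] partial_sum_le_total[OF that, of "co n A"] total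
      corner_sum_full_column[of A i n] corner_sum_full_row[of A n i] by simp_all
  have f: "?f i = vec.span (g ` {..<corner_sum A i n})" and
       f': "?f' i = vec.span (h ` {..<corner_sum A n i})" if "i \<le> n" for i
    using flag_from_eq_span_prefix[OF g total(1) that] flag_from_eq_span_prefix[OF h total(2) that]
      corner_sum_full_column[of A i n] corner_sum_full_row[of A n i] by simp_all
  have "meet_dim ?f ?f' i j = corner_sum A i j \<longleftrightarrow>
      (corner_sum A i n \<le> corner_sum A n j \<longrightarrow> ?f i \<subseteq> ?f' j) \<and>
      (corner_sum A n j \<le> corner_sum A i n \<longrightarrow> ?f' j \<subseteq> ?f i)" if ij: "i \<le> n" "j \<le> n" for i j
    using dim_Int_eq_min_iff[of "?f i" "?f' j"] corner_sum_eq_min[OF nc ij]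
      dim_span_prefix[OF g le(1)[OF ij(1)]] dim_span_prefix[OF h le(2)[OF ij(2)]]
    unfolding meet_dim_def f[OF ij(1)] f'[OF ij(2)] by (simp add: vec.subspace_span)
  then show ?thesis
    using n by (simp add: orbit_iff_meet_dims flag_from_is_flag f f' cong: imp_cong)
qed

lemma corner_sum_le_Theta:
  assumes "A \<in> Theta n r" "i \<le> n" "j \<le> n"
  shows "corner_sum A i j \<le> r"
  using corner_sum_mono[of i n j n A] corner_sum_Theta[OF assms(1)] assms(2,3) by simp

text \<open>On GL_pairs this is the locus where the first p vectors of the basis indexed by the
  negation of s lie in the span of the first m vectors of the basis indexed by s.\<close>
definition prefix_incl_locus :: "bool \<Rightarrow> nat \<Rightarrow> nat \<Rightarrow> ((bool \<times> nat \<times> 'r::finite) \<Rightarrow> 'k::field) set"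
  where "prefix_incl_locus s p m = {x. \<forall>k<p. \<forall>l. m \<le> l \<and> l < CARD('r) \<longrightarrow>
           det (matrix_of_family ((basis_of x s)(l := basis_of x (\<not> s) k))) = 0}"

lemma zariski_closed_prefix_incl_locus:
  "zariski_closed (prefix_incl_locus s p m :: ((bool \<times> nat \<times> 'r::finite) \<Rightarrow> 'k::field) set)"
proof -
  let ?d = "\<lambda>k l x. det (matrix_of_family ((basis_of x s)(l := basis_of x (\<not> s) k)))"
  have d: "?d k l = (\<lambda>x. det (\<chi> a b. (\<lambda>x. x (if col_index b = l then (\<not> s, k, a)
                                           else (s, col_index b, a))) x))" for k l
    by (intro ext arg_cong[where f = det]) (simp add: vec_eq_iff matrix_of_family_def basis_of_def)
  have poly: "?d k l \<in> poly_funs" for k l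
    unfolding d by (intro poly_funs_det poly_funs.var)
  have "(prefix_incl_locus s p m :: ((bool \<times> nat \<times> 'r) \<Rightarrow> 'k) set) =
      (\<Inter>(k, l)\<in>{(k, l). k < p \<and> m \<le> l \<and> l < CARD('r)}. {x. ?d k l x = 0})"
    by (auto simp: prefix_incl_locus_def)
  then show ?thesis
    by (auto intro!: zariski_closed_Inter zariski_closed_zero_set poly)
qed

lemma prefix_incl_locus_iff:
  assumes "x \<in> GL_pairs" "m \<le> CARD('r::finite)"
  shows "x \<in> (prefix_incl_locus s p m :: ((bool \<times> nat \<times> 'r) \<Rightarrow> 'k::field) set) \<longleftrightarrow>
    vec.span (basis_of x (\<not> s) ` {..<p}) \<subseteq> vec.span (basis_of x s ` {..<m})"
proof -
  have "is_basis_family (basis_of x s)"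
    using assms(1) by (cases s) (simp_all add: GL_pairs_def)
  from span_prefix_subset_iff_det[OF this assms(2)] show ?thesis
    by (simp add: prefix_incl_locus_def)
qed

lemma orbit_closed_if_no_crossing:
  assumes n: "n > 0" and A: "A \<in> Theta n CARD('r::finite)" and nc: "no_crossing n A"
  shows "flag_closed n (ro n A) (co n A)
           (orbit n A :: ((nat \<Rightarrow> ('k::field^'r) set) \<times> (nat \<Rightarrow> ('k^'r) set)) set)"
proof -
  let ?R = "\<lambda>i. corner_sum A i n" and ?C = "\<lambda>j. corner_sum A n j"
  define Z :: "((bool \<times> nat \<times> 'r) \<Rightarrow> 'k) set" where
    "Z = (\<Inter>i\<in>{..n}. \<Inter>j\<in>{..n}.
           {x. ?R i \<le> ?C j \<longrightarrow> x \<in> prefix_incl_locus True (?R i) (?C j)} \<inter>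
           {x. ?C j \<le> ?R i \<longrightarrow> x \<in> prefix_incl_locus False (?C j) (?R i)})"
  have "zariski_closed Z"
    unfolding Z_def
    by (auto intro!: zariski_closed_Inter zariski_closed_Int zariski_closed_imp
        zariski_closed_prefix_incl_locus)
  moreover have "(flag_from n (ro n A) (basis_of x False), flag_from n (co n A) (basis_of x True))
                   \<in> (orbit n A :: ((nat \<Rightarrow> ('k^'r) set) \<times> _) set) \<longleftrightarrow> x \<in> Z"
    if x: "x \<in> GL_pairs" for x
  proof -
    have "is_basis_family (basis_of x False)" "is_basis_family (basis_of x True)"
      using x by (simp_all add: GL_pairs_def)
    from flags_from_in_orbit_iff_inclusions[OF n A nc this] show ?thesis
      unfolding Z_def INT_iff Int_iff mem_Collect_eq
      by (simp add: prefix_incl_locus_iff[OF x] corner_sum_le_Theta[OF A] Ball_def)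
  qed
  ultimately show ?thesis
    unfolding flag_closed_def using orbit_subset_flags_of_type by blast
qed

section \<open>Coordinates indexed by cells\<close>

lemma length_concat_blocks: "length (concat (map F [1..<Suc m])) = (\<Sum>k=1..m. length (F k))"
  by (induction m) auto

lemma set_take_concat_blocks:
  assumes "i \<le> m"
  shows "set (take (\<Sum>k=1..i. length (F k)) (concat (map F [1..<Suc m]))) = (\<Union>k\<in>{1..i}. set (F k))"
proof -
  have "take (\<Sum>k=1..i. length (F k)) (concat (map F [1..<Suc m])) = concat (map F [1..<Suc i])"
    using assms
  proof (induction m)
    case (Suc m)
    show ?case
    proof (cases "i \<le> m")
      case True
      have "(\<Sum>k=1..i. length (F k)) \<le> length (concat (map F [1..<Suc m]))"
        unfolding length_concat_blocks using True by (intro sum_mono2) auto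
      with Suc True show ?thesis by simp
    next
      case False
      with Suc.prems have "i = Suc m" by simp
      then show ?thesis using length_concat_blocks[of F "Suc m"] by simp
    qed
  qed simp
  then show ?thesis
    by (simp add: atLeastLessThanSuc_atLeastAtMost del: upt_Suc)
qed

text \<open>The entry a_kl contributes the cells (k, l, q) with q < a_kl; they index a basis adapted to
  both flags of a point of the orbit, the row-major and column-major orders listing it so that
  the subspaces of the two flags are spanned by prefixes.\<close>
definition cells :: "nat \<Rightarrow> (nat \<Rightarrow> nat \<Rightarrow> nat) \<Rightarrow> (nat \<times> nat \<times> nat) set" where
  "cells n A = (SIGMA k:{1..n}. SIGMA l:{1..n}. {..<A k l})"

definition row_major_cells :: "nat \<Rightarrow> (nat \<Rightarrow> nat \<Rightarrow> nat) \<Rightarrow> (nat \<times> nat \<times> nat) list" where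
  "row_major_cells n A =
     concat (map (\<lambda>k. concat (map (\<lambda>l. map (\<lambda>q. (k, l, q)) [0..<A k l]) [1..<Suc n])) [1..<Suc n])"

definition col_major_cells :: "nat \<Rightarrow> (nat \<Rightarrow> nat \<Rightarrow> nat) \<Rightarrow> (nat \<times> nat \<times> nat) list" where
  "col_major_cells n A =
     concat (map (\<lambda>l. concat (map (\<lambda>k. map (\<lambda>q. (k, l, q)) [0..<A k l]) [1..<Suc n])) [1..<Suc n])"

lemma finite_cells: "finite (cells n A)"
  by (simp add: cells_def)

lemma card_cells_corner:
  assumes "i \<le> n" "j \<le> n"
  shows "card {c \<in> cells n A. fst c \<le> i \<and> fst (snd c) \<le> j} = corner_sum A i j"
proof -
  have "{c \<in> cells n A. fst c \<le> i \<and> fst (snd c) \<le> j} = (SIGMA k:{1..i}. SIGMA l:{1..j}. {..<A k l})"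
    using assms by (auto simp: cells_def)
  then show ?thesis by (simp add: card_SigmaI corner_sum_def)
qed

lemma set_take_row_major_cells:
  assumes "i \<le> n"
  shows "set (take (corner_sum A i n) (row_major_cells n A)) = {c \<in> cells n A. fst c \<le> i}"
proof -
  let ?F = "\<lambda>k. concat (map (\<lambda>l. map (\<lambda>q. (k, l, q)) [0..<A k l]) [1..<Suc n])"
  have "length (?F k) = (\<Sum>l=1..n. A k l)" for k
    unfolding length_concat_blocks by simp
  then have "corner_sum A i n = (\<Sum>k=1..i. length (?F k))"
    by (simp add: corner_sum_def)
  then have "set (take (corner_sum A i n) (row_major_cells n A)) = (\<Union>k\<in>{1..i}. set (?F k))"
    unfolding row_major_cells_def using set_take_concat_blocks[OF assms, of ?F] by simp
  also have "\<dots> = {c \<in> cells n A. fst c \<le> i}"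
    using assms by (force simp: cells_def atLeastLessThanSuc_atLeastAtMost simp del: upt_Suc)
  finally show ?thesis .
qed

lemma set_take_col_major_cells:
  assumes "j \<le> n"
  shows "set (take (corner_sum A n j) (col_major_cells n A)) = {c \<in> cells n A. fst (snd c) \<le> j}"
proof -
  let ?F = "\<lambda>l. concat (map (\<lambda>k. map (\<lambda>q. (k, l, q)) [0..<A k l]) [1..<Suc n])"
  have "length (?F l) = (\<Sum>k=1..n. A k l)" for l
    unfolding length_concat_blocks by simp
  moreover have "corner_sum A n j = (\<Sum>l=1..j. \<Sum>k=1..n. A k l)"
    unfolding corner_sum_def by (rule sum.swap)
  ultimately have "corner_sum A n j = (\<Sum>l=1..j. length (?F l))"
    by simp
  then have "set (take (corner_sum A n j) (col_major_cells n A)) = (\<Union>l\<in>{1..j}. set (?F l))"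
    unfolding col_major_cells_def using set_take_concat_blocks[OF assms, of ?F] by simp
  also have "\<dots> = {c \<in> cells n A. fst (snd c) \<le> j}"
    using assms by (force simp: cells_def atLeastLessThanSuc_atLeastAtMost simp del: upt_Suc)
  finally show ?thesis .
qed

lemma length_cell_lists:
  "length (row_major_cells n A) = corner_sum A n n" "length (col_major_cells n A) = corner_sum A n n"
proof -
  show "length (row_major_cells n A) = corner_sum A n n"
    unfolding row_major_cells_def length_concat_blocks length_map length_upt
    by (simp add: corner_sum_def)
  have "length (col_major_cells n A) = (\<Sum>l=1..n. \<Sum>k=1..n. A k l)"
    unfolding col_major_cells_def length_concat_blocks length_map length_upt by simp
  also have "\<dots> = corner_sum A n n"
    unfolding corner_sum_def by (rule sum.swap)
  finally show "length (col_major_cells n A) = corner_sum A n n" .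
qed

lemma set_cell_lists:
  "set (row_major_cells n A) = cells n A" "set (col_major_cells n A) = cells n A"
proof -
  have "{c \<in> cells n A. fst c \<le> n} = cells n A" "{c \<in> cells n A. fst (snd c) \<le> n} = cells n A"
    by (auto simp: cells_def)
  moreover have "set (row_major_cells n A) = set (take (corner_sum A n n) (row_major_cells n A))"
    "set (col_major_cells n A) = set (take (corner_sum A n n) (col_major_cells n A))"
    by (simp_all add: length_cell_lists)
  ultimately show "set (row_major_cells n A) = cells n A" "set (col_major_cells n A) = cells n A"
    using set_take_row_major_cells[of n n A] set_take_col_major_cells[of n n A] by simp_all
qed

definition list_family :: "('c \<Rightarrow> 'k::zero^'r::finite) \<Rightarrow> 'c list \<Rightarrow> nat \<Rightarrow> 'k^'r" where
  "list_family F xs p = (if p < CARD('r) then F (xs ! p) else 0)"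

lemma list_family_image_prefix:
  fixes F :: "'c \<Rightarrow> 'k::zero^'r::finite"
  assumes "length xs = CARD('r)" "m \<le> CARD('r)"
  shows "list_family F xs ` {..<m} = F ` set (take m xs)"
proof -
  have "list_family F xs ` {..<m} = F ` (!) xs ` {0..<m}"
    using assms(2) by (force simp: list_family_def image_iff)
  also have "\<dots> = F ` set (take m xs)" using assms by (simp add: nth_image)
  finally show ?thesis .
qed

lemma flag_from_list_family:
  fixes F :: "'c \<Rightarrow> 'k::field^'r::finite"
  assumes len: "length xs = CARD('r)" and sp: "vec.span (F ` set xs) = UNIV"
    and total: "(\<Sum>l=1..n. lam l) = CARD('r)" and i: "i \<le> n"
  shows "is_basis_family (list_family F xs)"
    and "flag_from n lam (list_family F xs) i = vec.span (F ` set (take (\<Sum>l=1..i. lam l) xs))"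
proof -
  show b: "is_basis_family (list_family F xs)"
    unfolding is_basis_family_iff_span list_family_image_prefix[OF len order.refl]
    using len sp by simp
  have le: "(\<Sum>l=1..i. lam l) \<le> CARD('r)" using partial_sum_le_total[OF i, of lam] total by simp
  show "flag_from n lam (list_family F xs) i = vec.span (F ` set (take (\<Sum>l=1..i. lam l) xs))"
    using flag_from_eq_span_prefix[OF b total i] list_family_image_prefix[OF len le, of F] by simp
qed

locale cell_coordinates =
  fixes n :: nat and A :: "nat \<Rightarrow> nat \<Rightarrow> nat" and \<phi> :: "nat \<times> nat \<times> nat \<Rightarrow> 'r::finite"
  assumes A: "A \<in> Theta n CARD('r)" and \<phi>: "bij_betw \<phi> (cells n A) UNIV"
begin

definition E :: "nat \<times> nat \<times> nat \<Rightarrow> 'k::field^'r" where "E c = axis (\<phi> c) 1"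

definition rows_le :: "nat \<Rightarrow> (nat \<times> nat \<times> nat) set"
  where "rows_le i = {c \<in> cells n A. fst c \<le> i}"

definition cols_le :: "nat \<Rightarrow> (nat \<times> nat \<times> nat) set"
  where "cols_le j = {c \<in> cells n A. fst (snd c) \<le> j}"

lemma E_image: "(E :: _ \<Rightarrow> 'k::field^'r) ` X = (\<lambda>i. axis i 1) ` \<phi> ` X"
  by (auto simp: E_def)

lemma E_component:
  assumes "c \<in> cells n A" "d \<in> cells n A"
  shows "(E c :: 'k::field^'r) $ \<phi> d = (if c = d then 1 else 0)"
  using assms \<phi> by (auto simp: E_def axis_def bij_betw_def inj_on_def)

lemma span_E_cells: "vec.span ((E :: _ \<Rightarrow> 'k::field^'r) ` cells n A) = UNIV"
  using \<phi> unfolding E_image span_axis_image by (simp add: bij_betw_def)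

lemma dim_span_E_Int:
  assumes "X \<subseteq> cells n A" "Y \<subseteq> cells n A"
  shows "vec.dim (vec.span ((E :: _ \<Rightarrow> 'k::field^'r) ` X) \<inter> vec.span (E ` Y)) = card (X \<inter> Y)"
proof -
  have inj: "inj_on \<phi> (cells n A)" using \<phi> by (simp add: bij_betw_def)
  have "\<phi> ` X \<inter> \<phi> ` Y = \<phi> ` (X \<inter> Y)" by (rule inj_on_image_Int[OF inj assms, symmetric])
  moreover have "card (\<phi> ` (X \<inter> Y)) = card (X \<inter> Y)"
    using inj assms by (intro card_image) (auto intro: inj_on_subset)
  ultimately show ?thesis unfolding E_image dim_span_axis_Int by simp
qed

lemma dim_span_E:
  assumes "X \<subseteq> cells n A"
  shows "vec.dim (vec.span ((E :: _ \<Rightarrow> 'k::field^'r) ` X)) = card X"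
  using dim_span_E_Int[OF assms assms] by simp

lemma card_rows_le_Int_cols_le:
  "i \<le> n \<Longrightarrow> j \<le> n \<Longrightarrow> card (rows_le i \<inter> cols_le j) = corner_sum A i j"
  using card_cells_corner[of i n j A]
  by (simp add: rows_le_def cols_le_def Int_def conj_commute conj_left_commute)

lemma flag_from_row_major:
  fixes F :: "nat \<times> nat \<times> nat \<Rightarrow> 'k::field^'r"
  assumes sp: "vec.span (F ` cells n A) = UNIV" and i: "i \<le> n"
  shows "is_basis_family (list_family F (row_major_cells n A))"
    and "flag_from n (ro n A) (list_family F (row_major_cells n A)) i = vec.span (F ` rows_le i)"
proof -
  have total: "(\<Sum>l=1..n. ro n A l) = CARD('r)" "length (row_major_cells n A) = CARD('r)"
    using corner_sum_Theta[OF A] corner_sum_full_column[of A n n] length_cell_lists(1)[of n A]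
    by simp_all
  note fl = flag_from_list_family[OF total(2) _ total(1) i, unfolded set_cell_lists]
  show "is_basis_family (list_family F (row_major_cells n A))" by (rule fl(1)[OF sp])
  show "flag_from n (ro n A) (list_family F (row_major_cells n A)) i = vec.span (F ` rows_le i)"
    using fl(2)[OF sp] set_take_row_major_cells[OF i, of A] corner_sum_full_column[of A i n]
    by (simp add: rows_le_def)
qed

lemma flag_from_col_major:
  fixes F :: "nat \<times> nat \<times> nat \<Rightarrow> 'k::field^'r"
  assumes sp: "vec.span (F ` cells n A) = UNIV" and j: "j \<le> n"
  shows "is_basis_family (list_family F (col_major_cells n A))"
    and "flag_from n (co n A) (list_family F (col_major_cells n A)) j = vec.span (F ` cols_le j)"
proof -
  have total: "(\<Sum>l=1..n. co n A l) = CARD('r)" "length (col_major_cells n A) = CARD('r)"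
    using corner_sum_Theta[OF A] corner_sum_full_row[of A n n] length_cell_lists(2)[of n A]
    by simp_all
  note fl = flag_from_list_family[OF total(2) _ total(1) j, unfolded set_cell_lists]
  show "is_basis_family (list_family F (col_major_cells n A))" by (rule fl(1)[OF sp])
  show "flag_from n (co n A) (list_family F (col_major_cells n A)) j = vec.span (F ` cols_le j)"
    using fl(2)[OF sp] set_take_col_major_cells[OF j, of A] corner_sum_full_row[of A n j]
    by (simp add: cols_le_def)
qed

end

section \<open>A crossing yields a degenerating family\<close>

lemma image_span_eq_if_inj_linear:
  fixes f :: "'k::field^'r::finite \<Rightarrow> 'k^'r"
  assumes lin: "Vector_Spaces.linear (*s) (*s) f" and inj: "inj f"
    and into: "f ` X \<subseteq> vec.span X"
  shows "f ` vec.span X = vec.span X"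
proof (rule vec.subspace_dim_equal)
  have img: "f ` vec.span X = vec.span (f ` X)"
    using vec.span_image[of "matrix f" X] by (simp add: matrix_vector_mul(1)[OF lin])
  then show "vec.subspace (f ` vec.span X)" by simp
  show "f ` vec.span X \<subseteq> vec.span X"
    unfolding img using into by (simp add: vec.span_minimal)
  show "vec.dim (vec.span X) \<le> vec.dim (f ` vec.span X)"
    using vec.dim_image_eq[OF lin, of "vec.span X"] inj by (simp add: inj_on_def inj_def)
qed simp

locale crossing = cell_coordinates n A \<phi> for n A and \<phi> :: "nat \<times> nat \<times> nat \<Rightarrow> 'r::finite" +
  fixes i0 j0 s0 t0 :: nat
  assumes rows: "1 \<le> i0" "i0 < j0" "j0 \<le> n" and cols: "1 \<le> s0" "s0 < t0" "t0 \<le> n"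
    and entries: "A i0 t0 > 0" "A j0 s0 > 0"
begin

abbreviation "u \<equiv> (i0, t0, 0::nat)"
abbreviation "w \<equiv> (j0, s0, 0::nat)"

lemma crossing_indices_neq [simp]: "i0 \<noteq> j0" "j0 \<noteq> i0" "s0 \<noteq> t0" "t0 \<noteq> s0"
  using rows cols by auto

lemma u_w_cells: "u \<in> cells n A" "w \<in> cells n A" "u \<noteq> w"
  using rows cols entries by (auto simp: cells_def)

text \<open>For t \<noteq> 0 its flag is the image of the
  coordinate column flag under shear t, which fixes the coordinate row flag because the row of u
  lies above that of w; at t = 0 it is the coordinate basis with u and w exchanged.\<close>
definition degen :: "'k::field \<Rightarrow> nat \<times> nat \<times> nat \<Rightarrow> 'k^'r" where
  "degen t c = (if c = u then E w else if c = w then E u + t *s E w else E c)"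

definition shear :: "'k::field \<Rightarrow> 'k^'r \<Rightarrow> 'k^'r" where
  "shear t v = v + (v $ \<phi> w) *s (E u + (t - 1) *s E w)"

lemma shear_E:
  assumes "c \<in> cells n A"
  shows "shear t (E c :: 'k::field^'r) = (if c = w then E u + t *s E w else E c)"
  using E_component[OF assms u_w_cells(2), where 'k='k]
  by (auto simp: shear_def vec_eq_iff algebra_simps)

lemma linear_shear: "Vector_Spaces.linear (*s) (*s) (shear t :: 'k::field^'r \<Rightarrow> _)"
  by (auto simp: shear_def Vector_Spaces.linear_iff vec_eq_iff algebra_simps vec.vector_space_axioms)

lemma inj_shear:
  assumes "t \<noteq> 0"
  shows "inj (shear t :: 'k::field^'r \<Rightarrow> _)"
proof
  fix v v' :: "'k^'r"
  assume eq: "shear t v = shear t v'"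
  have "shear t x $ \<phi> w = t * x $ \<phi> w" for x :: "'k^'r"
    using E_component[OF u_w_cells(1) u_w_cells(2), where 'k='k]
      E_component[OF u_w_cells(2) u_w_cells(2), where 'k='k] u_w_cells(3)
    by (simp add: shear_def algebra_simps)
  with eq assms have "v $ \<phi> w = v' $ \<phi> w" by (metis mult_left_cancel)
  with eq show "v = v'" by (simp add: shear_def)
qed

lemma span_degen_UNIV: "vec.span ((degen t :: _ \<Rightarrow> 'k::field^'r) ` cells n A) = UNIV"
proof -
  let ?S = "vec.span ((degen t :: _ \<Rightarrow> 'k^'r) ` cells n A)"
  have Ew: "E w \<in> ?S"
    using u_w_cells by (intro vec.span_base image_eqI[of _ _ u]) (auto simp: degen_def)
  have Fw: "E u + t *s E w \<in> ?S"
    using u_w_cells by (intro vec.span_base image_eqI[of _ _ w]) (auto simp: degen_def)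
  have "E u = (E u + t *s E w) - t *s E w" by simp
  then have Eu: "E u \<in> ?S" using Ew Fw by (metis vec.span_diff vec.span_scale)
  have "E c \<in> ?S" if "c \<in> cells n A" for c
  proof (cases "c = u \<or> c = w")
    case True
    then show ?thesis using Eu Ew by auto
  next
    case False
    then show ?thesis
      using that by (intro vec.span_base image_eqI[of _ _ c]) (auto simp: degen_def)
  qed
  then have "E ` cells n A \<subseteq> ?S" by auto
  then have "vec.span (E ` cells n A) \<subseteq> ?S" by (metis vec.span_minimal vec.subspace_span)
  then show ?thesis using span_E_cells by auto
qed

lemma shear_span_E:
  assumes t: "t \<noteq> 0" and S: "S \<subseteq> cells n A" and closed: "w \<in> S \<Longrightarrow> u \<in> S"
  shows "shear t ` vec.span ((E :: _ \<Rightarrow> 'k::field^'r) ` S) = vec.span (E ` S)"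
proof (rule image_span_eq_if_inj_linear[OF linear_shear inj_shear[OF t]])
  have "shear t (E c) \<in> vec.span ((E :: _ \<Rightarrow> 'k^'r) ` S)" if c: "c \<in> S" for c
  proof (cases "c = w")
    case True
    with c closed have "E u \<in> vec.span ((E :: _ \<Rightarrow> 'k^'r) ` S)"
      "E w \<in> vec.span ((E :: _ \<Rightarrow> 'k^'r) ` S)"
      by (auto intro: vec.span_base)
    moreover have "shear t (E c) = E u + t *s E w"
      using True shear_E[OF u_w_cells(2), of t] by simp
    ultimately show ?thesis by (simp add: vec.span_add vec.span_scale)
  next
    case False
    with c S show ?thesis by (simp add: shear_E subset_eq vec.span_base)
  qed
  then show "shear t ` E ` S \<subseteq> vec.span ((E :: _ \<Rightarrow> 'k^'r) ` S)" by auto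
qed

lemma span_degen_eq_shear:
  assumes t: "t \<noteq> 0" and S: "S \<subseteq> cells n A" and closed: "u \<in> S \<Longrightarrow> w \<in> S"
  shows "vec.span ((degen t :: _ \<Rightarrow> 'k::field^'r) ` S) = shear t ` vec.span (E ` S)"
proof (rule vec.subspace_dim_equal[symmetric])
  let ?T = "vec.span ((degen t :: _ \<Rightarrow> 'k^'r) ` S)"
  have img: "shear t ` vec.span ((E :: _ \<Rightarrow> 'k^'r) ` S) = vec.span (shear t ` E ` S)"
    using vec.span_image[of "matrix (shear t)" "E ` S"]
    by (simp add: matrix_vector_mul(1)[OF linear_shear])
  then show "vec.subspace (shear t ` vec.span ((E :: _ \<Rightarrow> 'k^'r) ` S))" by simp
  show "vec.subspace ?T" by simp
  have "shear t (E c) \<in> ?T" if c: "c \<in> S" for c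
  proof -
    have span_degen: "degen t d \<in> ?T" if "d \<in> S" for d
      using that by (intro vec.span_base imageI)
    have cS: "c \<in> cells n A" using c S by blast
    consider "c = w" | "c = u" | "c \<noteq> u" "c \<noteq> w" by blast
    then show ?thesis
    proof cases
      case 1
      then show ?thesis using span_degen[OF c] shear_E[OF cS, of t] by (simp add: degen_def)
    next
      case 2
      then have "shear t (E c) = degen t w - t *s degen t u"
        using shear_E[OF cS, of t] by (simp add: degen_def)
      then show ?thesis
        using span_degen c closed 2 by (simp add: vec.span_diff vec.span_scale)
    next
      case 3
      then show ?thesis using span_degen[OF c] shear_E[OF cS, of t] by (simp add: degen_def)
    qed
  qed
  then have "shear t ` E ` S \<subseteq> ?T" by auto
  then show "shear t ` vec.span (E ` S) \<subseteq> ?T"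
    unfolding img by (metis vec.span_minimal vec.subspace_span)
  have "finite S" using S finite_cells finite_subset by blast
  then have "vec.dim ?T \<le> card S"
    using vec.dim_le_card[of ?T "degen t ` S"] card_image_le[of S "degen t"] by simp
  also have "\<dots> = vec.dim (shear t ` vec.span ((E :: _ \<Rightarrow> 'k^'r) ` S))"
    using vec.dim_image_eq[OF linear_shear[of t], of "vec.span ((E :: _ \<Rightarrow> 'k^'r) ` S)"]
      inj_shear[OF t] dim_span_E[OF S, where 'k='k] by (simp add: inj_on_def inj_def)
  finally show "vec.dim ?T \<le> vec.dim (shear t ` vec.span (E ` S))" .
qed

lemma meet_dim_degen:
  assumes t: "t \<noteq> 0" and ij: "i \<le> n" "j \<le> n"
  shows "vec.dim (vec.span ((E :: _ \<Rightarrow> 'k::field^'r) ` rows_le i) \<inter> vec.span (degen t ` cols_le j))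
           = corner_sum A i j"
proof -
  let ?X = "vec.span ((E :: _ \<Rightarrow> 'k^'r) ` rows_le i)" and ?Y = "vec.span ((E :: _ \<Rightarrow> 'k^'r) ` cols_le j)"
  have PQ: "rows_le i \<subseteq> cells n A" "cols_le j \<subseteq> cells n A" by (auto simp: rows_le_def cols_le_def)
  have "w \<in> rows_le i \<Longrightarrow> u \<in> rows_le i" "u \<in> cols_le j \<Longrightarrow> w \<in> cols_le j"
    using rows cols u_w_cells by (auto simp: rows_le_def cols_le_def)
  from shear_span_E[OF t PQ(1) this(1)] span_degen_eq_shear[OF t PQ(2) this(2)]
  have "?X \<inter> vec.span (degen t ` cols_le j) = shear t ` ?X \<inter> shear t ` ?Y"
    by simp
  also have "\<dots> = shear t ` (?X \<inter> ?Y)" using inj_shear[OF t] by (simp add: image_Int)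
  finally have "vec.dim (?X \<inter> vec.span (degen t ` cols_le j)) = vec.dim (?X \<inter> ?Y)"
    using vec.dim_image_eq[OF linear_shear[of t], of "?X \<inter> ?Y"] inj_shear[OF t]
    by (simp add: inj_on_def inj_def)
  also have "\<dots> = corner_sum A i j" using dim_span_E_Int[OF PQ] card_rows_le_Int_cols_le[OF ij] by simp
  finally show ?thesis .
qed

lemma meet_dim_degen_0:
  "vec.dim (vec.span ((E :: _ \<Rightarrow> 'k::field^'r) ` rows_le i0) \<inter> vec.span (degen 0 ` cols_le s0))
     = corner_sum A i0 s0 + 1"
proof -
  define swap where "swap c = (if c = u then w else if c = w then u else c)" for c
  have degen0: "(degen 0 :: _ \<Rightarrow> 'k^'r) ` cols_le s0 = E ` swap ` cols_le s0"
    by (force simp: degen_def swap_def image_iff)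
  have swapQ: "swap ` cols_le s0 \<subseteq> cells n A" using u_w_cells by (auto simp: swap_def cols_le_def)
  have "c \<in> swap ` cols_le s0 \<longleftrightarrow> swap c \<in> cols_le s0" for c
    by (auto simp: swap_def image_iff)
  then have "rows_le i0 \<inter> swap ` cols_le s0 = insert u (rows_le i0 \<inter> cols_le s0)"
    using u_w_cells rows cols by (auto simp: swap_def rows_le_def cols_le_def)
  moreover have "u \<notin> rows_le i0 \<inter> cols_le s0" "finite (rows_le i0 \<inter> cols_le s0)"
    using cols finite_cells by (auto simp: rows_le_def cols_le_def)
  ultimately have "card (rows_le i0 \<inter> swap ` cols_le s0) = corner_sum A i0 s0 + 1"
    using card_rows_le_Int_cols_le rows cols by simp
  then show ?thesis
    unfolding degen0 by (subst dim_span_E_Int) (use swapQ in \<open>auto simp: rows_le_def\<close>)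
qed

end

context crossing
begin

definition curve :: "'k::field \<Rightarrow> (bool \<times> nat \<times> 'r) \<Rightarrow> 'k" where
  "curve t = (\<lambda>(s, p, c). if s then list_family (degen t) (col_major_cells n A) p $ c
                         else list_family E (row_major_cells n A) p $ c)"

lemma basis_of_curve:
  "basis_of (curve t) False = list_family E (row_major_cells n A)"
  "basis_of (curve t) True = list_family (degen t) (col_major_cells n A)"
  by (simp_all add: basis_of_def curve_def vec_eq_iff fun_eq_iff)

lemma curve_in_GL_pairs: "curve t \<in> GL_pairs"
  unfolding GL_pairs_def mem_Collect_eq basis_of_curve
  using flag_from_row_major(1)[OF span_E_cells, of 0] flag_from_col_major(1)[OF span_degen_UNIV, of 0]
  by (auto simp: curve_def list_family_def)

lemma curve_polynomial: "\<exists>Q. \<forall>t::'k::field. curve t v = poly Q t"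
proof -
  obtain s p c where v: "v = (s, p, c)" by (cases v)
  show ?thesis
  proof (cases "s \<and> p < CARD('r)")
    case True
    then have "curve t v = (degen t (col_major_cells n A ! p) :: 'k^'r) $ c" for t
      by (simp add: v curve_def list_family_def)
    then show ?thesis
      by (intro exI[of _ "[:degen 0 (col_major_cells n A ! p) $ c,
                            (if col_major_cells n A ! p = w then E w $ c else 0):]"])
         (simp add: degen_def)
  next
    case False
    then have "curve t v = curve 0 v" for t :: 'k by (auto simp: v curve_def list_family_def)
    then show ?thesis by (intro exI[of _ "[:curve 0 v:]"]) simp
  qed
qed

lemma curve_in_orbit_iff:
  "(flag_from n (ro n A) (basis_of (curve t) False), flag_from n (co n A) (basis_of (curve t) True))
      \<in> orbit n A \<longleftrightarrow>
   (\<forall>i\<le>n. \<forall>j\<le>n. vec.dim (vec.span (E ` rows_le i) \<inter> vec.span (degen (t::'k::field) ` cols_le j))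
                  = corner_sum A i j)"
proof -
  have n: "n > 0" using rows by simp
  show ?thesis
    using orbit_iff_meet_dims[OF flag_from_is_flag[OF n, of "ro n A" "basis_of (curve t) False"]
        flag_from_is_flag[OF n, of "co n A" "basis_of (curve t) True"], of A]
    by (simp add: meet_dim_def basis_of_curve flag_from_row_major(2)[OF span_E_cells]
        flag_from_col_major(2)[OF span_degen_UNIV])
qed

lemma orbit_not_flag_closed:
  "\<not> flag_closed n (ro n A) (co n A)
       (orbit n A :: ((nat \<Rightarrow> ('k::alg_closed_field^'r) set) \<times> (nat \<Rightarrow> ('k^'r) set)) set)"
proof
  assume "flag_closed n (ro n A) (co n A)
       (orbit n A :: ((nat \<Rightarrow> ('k^'r) set) \<times> (nat \<Rightarrow> ('k^'r) set)) set)"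
  then obtain Z :: "((bool \<times> nat \<times> 'r) \<Rightarrow> 'k) set" where Z: "zariski_closed Z" and
    preimage: "{x \<in> GL_pairs. (flag_from n (ro n A) (basis_of x False),
                                flag_from n (co n A) (basis_of x True)) \<in> orbit n A} = GL_pairs \<inter> Z"
    unfolding flag_closed_def by blast
  let ?orbit_preimage = "{x \<in> GL_pairs :: ((bool \<times> nat \<times> 'r) \<Rightarrow> 'k) set. (flag_from n (ro n A) (basis_of x False),
                              flag_from n (co n A) (basis_of x True)) \<in> orbit n A}"
  have "curve t \<in> ?orbit_preimage" if "t \<noteq> 0" for t
    using curve_in_GL_pairs meet_dim_degen[OF that] by (simp add: curve_in_orbit_iff)
  then have "curve t \<in> Z" if "t \<noteq> 0" for t
    using preimage that by blast
  then have "curve 0 \<in> Z"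
    by (rule zariski_closed_curve_limit[OF Z infinite_alg_closed_field curve_polynomial])
  then have "curve 0 \<in> ?orbit_preimage"
    using preimage curve_in_GL_pairs[of "0::'k"] by blast
  then have "\<forall>i\<le>n. \<forall>j\<le>n.
      vec.dim (vec.span (E ` rows_le i) \<inter> vec.span (degen (0::'k) ` cols_le j)) = corner_sum A i j"
    by (simp add: curve_in_orbit_iff)
  then show False
    using meet_dim_degen_0[where 'k='k] rows cols by fastforce
qed

end

lemma card_cells_Theta:
  assumes "A \<in> Theta n r"
  shows "card (cells n A) = r"
proof -
  have "{c \<in> cells n A. fst c \<le> n \<and> fst (snd c) \<le> n} = cells n A"
    by (auto simp: cells_def)
  then show ?thesis using card_cells_corner[of n n n A] corner_sum_Theta[OF assms] by simp
qed

theorem mainTheorem2: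
  fixes A :: "nat \<Rightarrow> nat \<Rightarrow> nat" and n :: nat
  assumes "n > 0" and "A \<in> Theta n CARD('r::finite)"
  shows "flag_closed n (ro n A) (co n A)
           (orbit n A :: ((nat \<Rightarrow> ('k::alg_closed_field^'r) set) \<times> (nat \<Rightarrow> ('k^'r) set)) set)
         \<longleftrightarrow> (\<forall>i j s t. 1 \<le> i \<and> i < j \<and> j \<le> n \<and> 1 \<le> s \<and> s < t \<and> t \<le> n
                  \<longrightarrow> A i t * A j s = 0)"
  unfolding no_crossing_def[symmetric]
proof
  assume closed: "flag_closed n (ro n A) (co n A)
    (orbit n A :: ((nat \<Rightarrow> ('k^'r) set) \<times> (nat \<Rightarrow> ('k^'r) set)) set)"
  show "no_crossing n A"
  proof (rule ccontr)
    assume "\<not> no_crossing n A"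
    then obtain i j s t where ij: "1 \<le> i" "i < j" "j \<le> n" and st: "1 \<le> s" "s < t" "t \<le> n"
      and entries: "A i t > 0" "A j s > 0"
      unfolding no_crossing_def by auto
    obtain \<phi> :: "nat \<times> nat \<times> nat \<Rightarrow> 'r" where "bij_betw \<phi> (cells n A) UNIV"
      using finite_same_card_bij[of "cells n A" "UNIV :: 'r set"] finite_cells
        card_cells_Theta[OF assms(2)] by auto
    then interpret crossing n A \<phi> i j s t
      using assms ij st entries by unfold_locales
    show False using orbit_not_flag_closed closed by blast
  qed
qed (rule orbit_closed_if_no_crossing[OF assms])

end
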